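(* Let $(\Lambda,d)$ be a finitely aligned $k$-graph and give $X_\Lambda$ the topology generated by the subbasis $\{D_G,X_\Lambda\setminus D_G:G\in S_\Lambda\}$. Then $D_F$ is compact for each $F\in S_\Lambda$.
   Context: A $k$-graph $(\Lambda,d)$ is a countable small category $\Lambda$ (objects identified with identity morphisms) with a functor $d:\Lambda\to\mathbb N^k$ satisfying unique factorization: whenever $d(\lambda)=m+n$ there are unique $\mu,\nu$ with $d(\mu)=m$, $d(\nu)=n$, $\lambda=\mu\nu$. $r,s$ range/source. $\Lambda^{\min}(\lambda,\mu)=\{(\alpha,\beta):\lambda\alpha=\mu\beta,\ d(\lambda\alpha)=d(\lambda)\vee d(\mu)\}$; finitely aligned means all are finite. $S_\Lambda$ is the set of finite $F\subseteq\{(\lambda,\mu):s(\lambda)=s(\mu)\}$ such that distinct $(\lambda,\mu),(\nu,\omega)\in F$ satisfy $\Lambda^{\min}(\lambda,\nu)=\Lambda^{\min}(\mu,\omega)=\emptyset$. $\Omega_{k,m}$ ($m\in(\mathbb N\cup\{\infty\})^k$): objects $\{p\in\mathbb N^k:p\le m\}$, morphisms $(p,q)$ with $p\le q\le m$, $r(p,q)=p$, $s(p,q)=q$, $d(p,q)=q-p$. $X_\Lambda$ = all degree-preserving functors $x:\Omega_{k,m}\to\Lambda$; $d(x)=m$. $D_F=\{x\in X_\Lambda:\exists(\lambda,\mu)\in F,\ d(\mu)\le d(x),\ x(0,d(\mu))=\mu\}$. *)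

theory Defs
  imports "HOL-Analysis.Analysis" "HOL-Library.Extended_Nat"
begin

text \<open>Elements of N^k are represented as functions nat => nat vanishing
  at all indices i >= k; the order is the pointwise order, join is pointwise max (sup),
  addition/subtraction are pointwise. A k-graph is given by a set Mor of morphisms,
  a set Obj of objects (identified with identity morphisms, Obj a subset of Mor),
  range r, source s, a composition cmp (cmp lam mu is "lam mu", defined when
  s lam = r mu) and a degree functor d.\<close>

definition in_Nk :: "nat \<Rightarrow> (nat \<Rightarrow> nat) \<Rightarrow> bool" where
  "in_Nk k n \<longleftrightarrow> (\<forall>i\<ge>k. n i = 0)"

definition k_graph ::
  "nat \<Rightarrow> 'a set \<Rightarrow> 'a set \<Rightarrow> ('a \<Rightarrow> 'a) \<Rightarrow> ('a \<Rightarrow> 'a) \<Rightarrow> ('a \<Rightarrow> 'a \<Rightarrow> 'a)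
     \<Rightarrow> ('a \<Rightarrow> nat \<Rightarrow> nat) \<Rightarrow> bool" where
  "k_graph k Mor Obj r s cmp d \<longleftrightarrow>
     countable Mor \<and> Obj \<subseteq> Mor \<and>
     (\<forall>l\<in>Mor. r l \<in> Obj \<and> s l \<in> Obj) \<and>
     (\<forall>v\<in>Obj. r v = v \<and> s v = v) \<and>
     (\<forall>l\<in>Mor. cmp (r l) l = l \<and> cmp l (s l) = l) \<and>
     (\<forall>l\<in>Mor. \<forall>m\<in>Mor. s l = r m \<longrightarrow>
        cmp l m \<in> Mor \<and> r (cmp l m) = r l \<and> s (cmp l m) = s m) \<and>
     (\<forall>l\<in>Mor. \<forall>m\<in>Mor. \<forall>n\<in>Mor. s l = r m \<longrightarrow> s m = r n \<longrightarrow>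
        cmp (cmp l m) n = cmp l (cmp m n)) \<and>
     (\<forall>l\<in>Mor. in_Nk k (d l)) \<and>
     (\<forall>v\<in>Obj. d v = (\<lambda>_. 0)) \<and>
     (\<forall>l\<in>Mor. \<forall>m\<in>Mor. s l = r m \<longrightarrow> d (cmp l m) = (\<lambda>i. d l i + d m i)) \<and>
     (\<forall>l\<in>Mor. \<forall>m n. in_Nk k m \<longrightarrow> in_Nk k n \<longrightarrow> d l = (\<lambda>i. m i + n i) \<longrightarrow>
        (\<exists>!(mu, nu). mu \<in> Mor \<and> nu \<in> Mor \<and> s mu = r nu \<and>
            d mu = m \<and> d nu = n \<and> l = cmp mu nu))"

definition MCE ::
  "'a set \<Rightarrow> ('a \<Rightarrow> 'a) \<Rightarrow> ('a \<Rightarrow> 'a) \<Rightarrow> ('a \<Rightarrow> 'a \<Rightarrow> 'a) \<Rightarrow> ('a \<Rightarrow> nat \<Rightarrow> nat)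
     \<Rightarrow> 'a \<Rightarrow> 'a \<Rightarrow> ('a \<times> 'a) set" where
  "MCE Mor r s cmp d l m =
     {(a, b). a \<in> Mor \<and> b \<in> Mor \<and> s l = r a \<and> s m = r b \<and>
              cmp l a = cmp m b \<and> d (cmp l a) = sup (d l) (d m)}"

definition finitely_aligned ::
  "'a set \<Rightarrow> ('a \<Rightarrow> 'a) \<Rightarrow> ('a \<Rightarrow> 'a) \<Rightarrow> ('a \<Rightarrow> 'a \<Rightarrow> 'a) \<Rightarrow> ('a \<Rightarrow> nat \<Rightarrow> nat) \<Rightarrow> bool" where
  "finitely_aligned Mor r s cmp d \<longleftrightarrow>
     (\<forall>l\<in>Mor. \<forall>m\<in>Mor. finite (MCE Mor r s cmp d l m))"

definition S_Lambda ::
  "'a set \<Rightarrow> ('a \<Rightarrow> 'a) \<Rightarrow> ('a \<Rightarrow> 'a) \<Rightarrow> ('a \<Rightarrow> 'a \<Rightarrow> 'a) \<Rightarrow> ('a \<Rightarrow> nat \<Rightarrow> nat)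
     \<Rightarrow> ('a \<times> 'a) set set" where
  "S_Lambda Mor r s cmp d =
     {F. finite F \<and> F \<subseteq> {(l, m). l \<in> Mor \<and> m \<in> Mor \<and> s l = s m} \<and>
         (\<forall>(l, m)\<in>F. \<forall>(n, w)\<in>F. (l, m) \<noteq> (n, w) \<longrightarrow>
             MCE Mor r s cmp d l n = {} \<and> MCE Mor r s cmp d m w = {})}"

text \<open>A path is a pair (m, x): m in (N u {infinity})^k (an enat-valued function vanishing
  at indices >= k) and x the action of the functor on the morphisms (p,q), p <= q <= m, of
  Omega_{k,m}; outside this domain x is fixed to undefined.\<close>

definition Omega_dom :: "(nat \<Rightarrow> enat) \<Rightarrow> ((nat \<Rightarrow> nat) \<times> (nat \<Rightarrow> nat)) set" where
  "Omega_dom m = {(p, q). p \<le> q \<and> (\<forall>i. enat (q i) \<le> m i)}"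

definition X_Lambda ::
  "nat \<Rightarrow> 'a set \<Rightarrow> 'a set \<Rightarrow> ('a \<Rightarrow> 'a) \<Rightarrow> ('a \<Rightarrow> 'a) \<Rightarrow> ('a \<Rightarrow> 'a \<Rightarrow> 'a)
     \<Rightarrow> ('a \<Rightarrow> nat \<Rightarrow> nat)
     \<Rightarrow> ((nat \<Rightarrow> enat) \<times> ((nat \<Rightarrow> nat) \<times> (nat \<Rightarrow> nat) \<Rightarrow> 'a)) set" where
  "X_Lambda k Mor Obj r s cmp d =
     {(m, x). (\<forall>i\<ge>k. m i = 0) \<and>
        (\<forall>pq. pq \<notin> Omega_dom m \<longrightarrow> x pq = undefined) \<and>
        (\<forall>(p, q)\<in>Omega_dom m.
            x (p, q) \<in> Mor \<and> d (x (p, q)) = (\<lambda>i. q i - p i) \<and>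
            r (x (p, q)) = x (p, p) \<and> s (x (p, q)) = x (q, q)) \<and>
        (\<forall>p. (p, p) \<in> Omega_dom m \<longrightarrow> x (p, p) \<in> Obj) \<and>
        (\<forall>p q t. (p, q) \<in> Omega_dom m \<longrightarrow> (q, t) \<in> Omega_dom m \<longrightarrow>
            cmp (x (p, q)) (x (q, t)) = x (p, t))}"

definition D_set ::
  "nat \<Rightarrow> 'a set \<Rightarrow> 'a set \<Rightarrow> ('a \<Rightarrow> 'a) \<Rightarrow> ('a \<Rightarrow> 'a) \<Rightarrow> ('a \<Rightarrow> 'a \<Rightarrow> 'a)
     \<Rightarrow> ('a \<Rightarrow> nat \<Rightarrow> nat) \<Rightarrow> ('a \<times> 'a) set
     \<Rightarrow> ((nat \<Rightarrow> enat) \<times> ((nat \<Rightarrow> nat) \<times> (nat \<Rightarrow> nat) \<Rightarrow> 'a)) set" where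
  "D_set k Mor Obj r s cmp d F =
     {(m, x) \<in> X_Lambda k Mor Obj r s cmp d.
        \<exists>(l, mu)\<in>F. (\<forall>i. enat (d mu i) \<le> m i) \<and> x (\<lambda>_. 0, d mu) = mu}"

definition path_topology ::
  "nat \<Rightarrow> 'a set \<Rightarrow> 'a set \<Rightarrow> ('a \<Rightarrow> 'a) \<Rightarrow> ('a \<Rightarrow> 'a) \<Rightarrow> ('a \<Rightarrow> 'a \<Rightarrow> 'a)
     \<Rightarrow> ('a \<Rightarrow> nat \<Rightarrow> nat)
     \<Rightarrow> ((nat \<Rightarrow> enat) \<times> ((nat \<Rightarrow> nat) \<times> (nat \<Rightarrow> nat) \<Rightarrow> 'a)) topology" where
  "path_topology k Mor Obj r s cmp d =
     topology_generated_by
       (insert (X_Lambda k Mor Obj r s cmp d)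
         (\<Union>G\<in>S_Lambda Mor r s cmp d.
            {D_set k Mor Obj r s cmp d G,
             X_Lambda k Mor Obj r s cmp d - D_set k Mor Obj r s cmp d G}))"

end

theory Submission
  imports Defs
begin

text \<open>Send every path y to its cylinder profile, the point v \<mapsto> [y \<in> Z(v)] of the
  Cantor cube {0,1}^\<Lambda>, where Z(v) is the set of paths starting with v. Every D_G is the preimage of a clopen subset of the cube, so the
  path topology is coarser than the topology pulled back along the profile map, and it suffices
  to show that the image of D_F is closed in the compact cube. A point \<chi> of its closure agrees
  on every finite set of morphisms with the profile of some path. Hence {v. \<chi> v} is closed
  under prefixes, contains at most one morphism of each degree and, by finite alignment, is
  directed; its morphisms therefore fit together into a single path, of degree the supremum of
  their degrees, whose profile is \<chi>.\<close>

lemma compactin_pullback_topology: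
  assumes "S \<subseteq> A" and compact: "compactin T (f ` S)"
  shows "compactin (pullback_topology A f T) S"
  unfolding compactin_def
proof (intro conjI allI impI)
  show "S \<subseteq> topspace (pullback_topology A f T)"
    using assms compactin_subset_topspace by (fastforce simp: topspace_pullback_topology)
  fix \<U> assume \<U>: "(\<forall>U\<in>\<U>. openin (pullback_topology A f T) U) \<and> S \<subseteq> \<Union>\<U>"
  then obtain V where V: "\<And>U. U \<in> \<U> \<Longrightarrow> openin T (V U)" "\<And>U. U \<in> \<U> \<Longrightarrow> U = f -` V U \<inter> A"
    unfolding openin_pullback_topology by metis
  have "f ` S \<subseteq> \<Union>(V ` \<U>)"
  proof
    fix z assume "z \<in> f ` S"
    then obtain y U where "y \<in> S" "z = f y" "U \<in> \<U>" "y \<in> U"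
      using \<U> by blast
    then show "z \<in> \<Union>(V ` \<U>)"
      using V(2) by blast
  qed
  moreover have "\<And>W. W \<in> V ` \<U> \<Longrightarrow> openin T W"
    using V(1) by blast
  ultimately obtain \<F> where "finite \<F>" "\<F> \<subseteq> V ` \<U>" "f ` S \<subseteq> \<Union>\<F>"
    using compactinD[OF compact] by meson
  then obtain \<U>' where \<U>': "\<U>' \<subseteq> \<U>" "finite \<U>'" "f ` S \<subseteq> \<Union>(V ` \<U>')"
    by (metis finite_subset_image)
  have "S \<subseteq> \<Union>\<U>'"
  proof
    fix y assume "y \<in> S"
    then obtain U where "U \<in> \<U>'" "f y \<in> V U"
      using \<U>'(3) by blast
    then show "y \<in> \<Union>\<U>'"
      using V(2) \<U>'(1) \<open>y \<in> S\<close> \<open>S \<subseteq> A\<close> by blast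
  qed
  then show "\<exists>\<F>. finite \<F> \<and> \<F> \<subseteq> \<U> \<and> S \<subseteq> \<Union>\<F>"
    using \<U>' by blast
qed

lemma
  fixes I :: "'i set" and U :: "'u set"
  assumes "i \<in> I"
  shows openin_product_discrete_coordinate:
      "openin (product_topology (\<lambda>_. discrete_topology U) I)
        {f \<in> topspace (product_topology (\<lambda>_. discrete_topology U) I). P (f i)}"
    and closedin_product_discrete_coordinate:
      "closedin (product_topology (\<lambda>_. discrete_topology U) I)
        {f \<in> topspace (product_topology (\<lambda>_. discrete_topology U) I). P (f i)}"
proof -
  have *: "{f \<in> topspace (product_topology (\<lambda>_. discrete_topology U) I). P (f i)} =
      {f \<in> topspace (product_topology (\<lambda>_. discrete_topology U) I). f i \<in> Collect P \<inter> U}"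
    using assms by auto
  show "openin (product_topology (\<lambda>_. discrete_topology U) I)
      {f \<in> topspace (product_topology (\<lambda>_. discrete_topology U) I). P (f i)}"
    unfolding * using continuous_map_product_projection[OF assms]
    by (rule openin_continuous_map_preimage) simp
  show "closedin (product_topology (\<lambda>_. discrete_topology U) I)
      {f \<in> topspace (product_topology (\<lambda>_. discrete_topology U) I). P (f i)}"
    unfolding * using continuous_map_product_projection[OF assms]
    by (rule closedin_continuous_map_preimage) simp
qed

lemma closedin_product_discrete:
  fixes I :: "'i set" and U :: "'u set"
  assumes "S \<subseteq> topspace (product_topology (\<lambda>_. discrete_topology U) I)"
    and finitely_approximable:
      "\<And>g. g \<in> topspace (product_topology (\<lambda>_. discrete_topology U) I) \<Longrightarrow>
        (\<And>K. finite K \<Longrightarrow> K \<subseteq> I \<Longrightarrow> \<exists>f\<in>S. \<forall>i\<in>K. f i = g i) \<Longrightarrow> g \<in> S"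
  shows "closedin (product_topology (\<lambda>_. discrete_topology U) I) S"
proof -
  let ?X = "product_topology (\<lambda>_. discrete_topology U) I"
  have "\<exists>N. openin ?X N \<and> g \<in> N \<and> N \<subseteq> topspace ?X - S" if g: "g \<in> topspace ?X - S" for g
  proof -
    have "\<not> (\<forall>K. finite K \<longrightarrow> K \<subseteq> I \<longrightarrow> (\<exists>f\<in>S. \<forall>i\<in>K. f i = g i))"
    proof
      assume "\<forall>K. finite K \<longrightarrow> K \<subseteq> I \<longrightarrow> (\<exists>f\<in>S. \<forall>i\<in>K. f i = g i)"
      then have "g \<in> S"
        by (intro finitely_approximable) (use g in auto)
      then show False
        using g by simp
    qed
    then obtain K where K: "finite K" "K \<subseteq> I" and apart: "\<forall>f\<in>S. \<exists>i\<in>K. f i \<noteq> g i"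
      by auto
    define N where "N = (\<Pi>\<^sub>E i\<in>I. if i \<in> K then {g i} else U)"
    have "finite {i \<in> I. (if i \<in> K then {g i} else U) \<noteq> U}"
      by (rule finite_subset[OF _ K(1)]) auto
    moreover have gU: "\<forall>i\<in>I. i \<in> K \<longrightarrow> g i \<in> U"
      using g by (auto simp: PiE_iff)
    ultimately have "openin ?X N"
      unfolding N_def openin_PiE_gen by auto
    moreover have "g \<in> N"
      using g unfolding N_def by (auto simp: PiE_iff)
    moreover have "N \<inter> S = {}"
      using apart K(2) unfolding N_def by (fastforce simp: PiE_iff)
    moreover have "N \<subseteq> topspace ?X"
      using gU by (simp add: N_def subset_PiE)
    ultimately show ?thesis
      by blast
  qed
  then have "openin ?X (topspace ?X - S)"
    by (subst openin_subopen) blast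
  then show ?thesis
    using assms(1) by (simp add: closedin_def)
qed

lemma Omega_dom_diag_iff: "(p, p) \<in> Omega_dom m \<longleftrightarrow> (\<forall>i. enat (p i) \<le> m i)"
  by (simp add: Omega_dom_def)

lemma Omega_dom_diag:
  assumes "(p, q) \<in> Omega_dom m"
  shows "(p, p) \<in> Omega_dom m" "(q, q) \<in> Omega_dom m"
  using assms unfolding Omega_dom_def le_fun_def by (auto, meson enat_ord_simps(1) order_trans)

lemma Omega_dom_trans: "(p, q) \<in> Omega_dom m \<Longrightarrow> (q, t) \<in> Omega_dom m \<Longrightarrow> (p, t) \<in> Omega_dom m"
  unfolding Omega_dom_def by auto

locale kgraph =
  fixes k :: nat and Mor Obj :: "'a set" and r s :: "'a \<Rightarrow> 'a"
    and cmp :: "'a \<Rightarrow> 'a \<Rightarrow> 'a" and d :: "'a \<Rightarrow> nat \<Rightarrow> nat"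
  assumes is_k_graph: "k_graph k Mor Obj r s cmp d"
begin

lemma Obj_subset_Mor: "Obj \<subseteq> Mor"
  using is_k_graph by (simp add: k_graph_def)

lemma r_in_Obj: "l \<in> Mor \<Longrightarrow> r l \<in> Obj"
  and s_in_Obj: "l \<in> Mor \<Longrightarrow> s l \<in> Obj"
  using is_k_graph by (simp_all add: k_graph_def)

lemma r_Obj: "v \<in> Obj \<Longrightarrow> r v = v"
  and s_Obj: "v \<in> Obj \<Longrightarrow> s v = v"
  using is_k_graph by (simp_all add: k_graph_def)

lemma cmp_r_left: "l \<in> Mor \<Longrightarrow> cmp (r l) l = l"
  and cmp_s_right: "l \<in> Mor \<Longrightarrow> cmp l (s l) = l"
  using is_k_graph by (simp_all add: k_graph_def)

lemma cmp_in_Mor: "l \<in> Mor \<Longrightarrow> m \<in> Mor \<Longrightarrow> s l = r m \<Longrightarrow> cmp l m \<in> Mor"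
  and r_cmp: "l \<in> Mor \<Longrightarrow> m \<in> Mor \<Longrightarrow> s l = r m \<Longrightarrow> r (cmp l m) = r l"
  and s_cmp: "l \<in> Mor \<Longrightarrow> m \<in> Mor \<Longrightarrow> s l = r m \<Longrightarrow> s (cmp l m) = s m"
  using is_k_graph by (simp_all add: k_graph_def)

lemma cmp_assoc:
  "l \<in> Mor \<Longrightarrow> m \<in> Mor \<Longrightarrow> n \<in> Mor \<Longrightarrow> s l = r m \<Longrightarrow> s m = r n \<Longrightarrow>
    cmp (cmp l m) n = cmp l (cmp m n)"
  using is_k_graph by (simp add: k_graph_def)

lemma d_in_Nk: "l \<in> Mor \<Longrightarrow> in_Nk k (d l)"
  and d_Obj: "v \<in> Obj \<Longrightarrow> d v = (\<lambda>_. 0)"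
  and d_cmp: "l \<in> Mor \<Longrightarrow> m \<in> Mor \<Longrightarrow> s l = r m \<Longrightarrow> d (cmp l m) = (\<lambda>i. d l i + d m i)"
  using is_k_graph by (simp_all add: k_graph_def)

lemma unique_factorization:
  "l \<in> Mor \<Longrightarrow> in_Nk k m \<Longrightarrow> in_Nk k n \<Longrightarrow> d l = (\<lambda>i. m i + n i) \<Longrightarrow>
    \<exists>!(a, b). a \<in> Mor \<and> b \<in> Mor \<and> s a = r b \<and> d a = m \<and> d b = n \<and> l = cmp a b"
  using is_k_graph by (simp add: k_graph_def)

lemma factorization_exists:
  assumes "l \<in> Mor" "in_Nk k m" "in_Nk k n" "d l = (\<lambda>i. m i + n i)"
  obtains a b where "a \<in> Mor" "b \<in> Mor" "s a = r b" "d a = m" "d b = n" "l = cmp a b"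
  using unique_factorization[OF assms] by blast

lemma factorization_le:
  assumes "l \<in> Mor" "p \<le> d l"
  obtains a b where "a \<in> Mor" "b \<in> Mor" "s a = r b" "d a = p" "d b = (\<lambda>i. d l i - p i)"
    "l = cmp a b"
proof -
  have "in_Nk k (d l)"
    using d_in_Nk assms(1) by blast
  then have Nk: "in_Nk k p" "in_Nk k (\<lambda>i. d l i - p i)"
    using assms(2) unfolding in_Nk_def le_fun_def by (metis le_zero_eq, simp)
  have "d l = (\<lambda>i. p i + (d l i - p i))"
    using assms(2) by (auto simp: le_fun_def)
  then show ?thesis
    using factorization_exists[OF assms(1) Nk] that by blast
qed

lemma factorization_unique:
  assumes "a \<in> Mor" "b \<in> Mor" "a' \<in> Mor" "b' \<in> Mor" "s a = r b" "s a' = r b'"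
    and "d a = d a'" "cmp a b = cmp a' b'"
  shows "a = a' \<and> b = b'"
proof -
  have deg: "d (cmp a b) = (\<lambda>i. d a i + d b i)"
    using assms d_cmp by blast
  moreover have "d (cmp a' b') = (\<lambda>i. d a' i + d b' i)"
    using assms d_cmp by blast
  ultimately have "d b = d b'"
    using \<open>d a = d a'\<close> \<open>cmp a b = cmp a' b'\<close> by (simp add: fun_eq_iff)
  define P where "P = (\<lambda>(mu, nu). mu \<in> Mor \<and> nu \<in> Mor \<and> s mu = r nu \<and>
      d mu = d a \<and> d nu = d b \<and> cmp a b = cmp mu nu)"
  have "\<exists>!z. P z"
    unfolding P_def by (rule unique_factorization) (use assms d_in_Nk deg cmp_in_Mor in auto)
  moreover have "P (a, b)" "P (a', b')"
    unfolding P_def using assms \<open>d b = d b'\<close> by auto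
  ultimately show ?thesis
    by (metis Pair_inject)
qed

lemma cmp_cancel_left:
  "a \<in> Mor \<Longrightarrow> b \<in> Mor \<Longrightarrow> b' \<in> Mor \<Longrightarrow> s a = r b \<Longrightarrow> s a = r b' \<Longrightarrow>
    cmp a b = cmp a b' \<Longrightarrow> b = b'"
  using factorization_unique[of a b a b'] by blast

abbreviation paths where
  "paths \<equiv> X_Lambda k Mor Obj r s cmp d"

lemma path_segment:
  assumes "(m, x) \<in> paths" "(p, q) \<in> Omega_dom m"
  shows "x (p, q) \<in> Mor" "d (x (p, q)) = (\<lambda>i. q i - p i)"
    and "r (x (p, q)) = x (p, p)" "s (x (p, q)) = x (q, q)"
  using assms unfolding X_Lambda_def by auto

lemma path_segment_cmp:
  assumes "(m, x) \<in> paths" "(p, q) \<in> Omega_dom m" "(q, t) \<in> Omega_dom m"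
  shows "cmp (x (p, q)) (x (q, t)) = x (p, t)"
  using assms unfolding X_Lambda_def by blast

definition cylinder :: "'a \<Rightarrow> ((nat \<Rightarrow> enat) \<times> ((nat \<Rightarrow> nat) \<times> (nat \<Rightarrow> nat) \<Rightarrow> 'a)) set" where
  "cylinder v = {(m, x) \<in> paths. (\<forall>i. enat (d v i) \<le> m i) \<and> x (\<lambda>_. 0, d v) = v}"

lemma cylinder_subset_paths: "cylinder v \<subseteq> paths"
  unfolding cylinder_def by auto

lemma D_set_eq_UN_cylinder: "D_set k Mor Obj r s cmp d G = (\<Union>mu\<in>snd ` G. cylinder mu)"
  unfolding D_set_def cylinder_def by force

lemma cylinder_cmp_subset:
  assumes "a \<in> Mor" "b \<in> Mor" "s a = r b"
  shows "cylinder (cmp a b) \<subseteq> cylinder a"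
proof
  fix y assume "y \<in> cylinder (cmp a b)"
  then obtain m x where y: "y = (m, x)" "(m, x) \<in> paths"
    and le: "\<forall>i. enat (d (cmp a b) i) \<le> m i" and start: "x (\<lambda>_. 0, d (cmp a b)) = cmp a b"
    unfolding cylinder_def by auto
  have deg: "d (cmp a b) = (\<lambda>i. d a i + d b i)"
    using d_cmp assms by blast
  then have le_a: "\<forall>i. enat (d a i) \<le> m i"
    using le by (metis enat_ord_simps(1) le_add1 order_trans)
  have dom1: "(\<lambda>_. 0, d a) \<in> Omega_dom m" and dom2: "(d a, d (cmp a b)) \<in> Omega_dom m"
    using le le_a deg by (auto simp: Omega_dom_def le_fun_def)
  have "cmp (x (\<lambda>_. 0, d a)) (x (d a, d (cmp a b))) = cmp a b"
    using path_segment_cmp[OF y(2) dom1 dom2] start by simp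
  then have "x (\<lambda>_. 0, d a) = a"
    using factorization_unique[of "x (\<lambda>_. 0, d a)" "x (d a, d (cmp a b))" a b]
      path_segment[OF y(2) dom1] path_segment[OF y(2) dom2] assms by auto
  then show "y \<in> cylinder a"
    using y le_a unfolding cylinder_def by auto
qed

lemma cylinder_Int_subset_UN_MCE:
  "cylinder n1 \<inter> cylinder n2 \<subseteq> (\<Union>(a, b)\<in>MCE Mor r s cmp d n1 n2. cylinder (cmp n1 a))"
proof
  fix y assume "y \<in> cylinder n1 \<inter> cylinder n2"
  then obtain m x where y: "y = (m, x)" "(m, x) \<in> paths"
    and le1: "\<forall>i. enat (d n1 i) \<le> m i" and start1: "x (\<lambda>_. 0, d n1) = n1"
    and le2: "\<forall>i. enat (d n2 i) \<le> m i" and start2: "x (\<lambda>_. 0, d n2) = n2"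
    unfolding cylinder_def by auto
  define n where "n = sup (d n1) (d n2)"
  have le: "\<forall>i. enat (n i) \<le> m i"
    using le1 le2 by (simp add: n_def sup_nat_def max_def)
  have dom: "(\<lambda>_. 0, n) \<in> Omega_dom m"
    "(\<lambda>_. 0, d n1) \<in> Omega_dom m" "(d n1, n) \<in> Omega_dom m"
    "(\<lambda>_. 0, d n2) \<in> Omega_dom m" "(d n2, n) \<in> Omega_dom m"
    using le le1 le2 by (auto simp: Omega_dom_def le_fun_def n_def)
  have deg: "d (x (\<lambda>_. 0, n)) = n"
    using path_segment(2)[OF y(2) dom(1)] by simp
  have cmp1: "cmp n1 (x (d n1, n)) = x (\<lambda>_. 0, n)"
    using path_segment_cmp[OF y(2) dom(2,3)] start1 by simp
  have cmp2: "cmp n2 (x (d n2, n)) = x (\<lambda>_. 0, n)"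
    using path_segment_cmp[OF y(2) dom(4,5)] start2 by simp
  have "(x (d n1, n), x (d n2, n)) \<in> MCE Mor r s cmp d n1 n2"
    unfolding MCE_def
    using path_segment[OF y(2)] path_segment(4)[OF y(2) dom(2)] path_segment(4)[OF y(2) dom(4)]
      dom start1 start2 cmp1 cmp2 deg n_def by auto
  moreover have "y \<in> cylinder (cmp n1 (x (d n1, n)))"
    using y le deg cmp1 unfolding cylinder_def by auto
  ultimately show "y \<in> (\<Union>(a, b)\<in>MCE Mor r s cmp d n1 n2. cylinder (cmp n1 a))"
    by force
qed

text \<open>The hypothesis finitely_realised says that \<chi> lies in the closure of the set of
  cylinder profiles of paths.\<close>

context
  fixes chi :: "'a \<Rightarrow> bool"
  assumes finitely_aligned: "finitely_aligned Mor r s cmp d"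
    and finitely_realised: "\<And>K. finite K \<Longrightarrow> K \<subseteq> Mor \<Longrightarrow> \<exists>y. \<forall>v\<in>K. y \<in> cylinder v \<longleftrightarrow> chi v"
    and chi_nonempty: "\<exists>v\<in>Mor. chi v"
begin

lemma chi_prefix_closed:
  assumes "a \<in> Mor" "b \<in> Mor" "s a = r b" "chi (cmp a b)"
  shows "chi a"
proof -
  obtain y where "\<forall>v\<in>{cmp a b, a}. y \<in> cylinder v \<longleftrightarrow> chi v"
    using finitely_realised[of "{cmp a b, a}"] assms cmp_in_Mor by auto
  then show ?thesis
    using cylinder_cmp_subset[OF assms(1-3)] assms(4) by auto
qed

lemma chi_degree_unique:
  assumes "v \<in> Mor" "w \<in> Mor" "chi v" "chi w" "d v = d w"
  shows "v = w"
proof -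
  obtain y where "\<forall>u\<in>{v, w}. y \<in> cylinder u \<longleftrightarrow> chi u"
    using finitely_realised[of "{v, w}"] assms by auto
  then have "y \<in> cylinder v" "y \<in> cylinder w"
    using assms by auto
  then show ?thesis
    using assms(5) unfolding cylinder_def by auto
qed

lemma chi_directed:
  assumes "n1 \<in> Mor" "n2 \<in> Mor" "chi n1" "chi n2"
  shows "\<exists>rho\<in>Mor. chi rho \<and> d n1 \<le> d rho \<and> d n2 \<le> d rho"
proof -
  define R where "R = (\<lambda>(a, b). cmp n1 a) ` MCE Mor r s cmp d n1 n2"
  have "finite R"
    using finitely_aligned assms unfolding finitely_aligned_def R_def by auto
  moreover have R_Mor: "R \<subseteq> Mor"
    unfolding R_def MCE_def using cmp_in_Mor assms by auto
  ultimately obtain y where y: "\<forall>v\<in>{n1, n2} \<union> R. y \<in> cylinder v \<longleftrightarrow> chi v"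
    using finitely_realised[of "{n1, n2} \<union> R"] assms by auto
  then have "y \<in> cylinder n1 \<inter> cylinder n2"
    using assms by auto
  then obtain a b where ab: "(a, b) \<in> MCE Mor r s cmp d n1 n2" and "y \<in> cylinder (cmp n1 a)"
    using cylinder_Int_subset_UN_MCE by blast
  moreover have "cmp n1 a \<in> R"
    using ab unfolding R_def by force
  moreover have "d (cmp n1 a) = sup (d n1) (d n2)"
    using ab unfolding MCE_def by auto
  ultimately show ?thesis
    using y R_Mor by (intro bexI[of _ "cmp n1 a"]) auto
qed

lemma chi_upper_bound:
  assumes "finite A" "A \<subseteq> {v \<in> Mor. chi v}"
  shows "\<exists>rho\<in>Mor. chi rho \<and> (\<forall>v\<in>A. d v \<le> d rho)"
  using assms
proof (induction A rule: finite_induct)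
  case empty
  then show ?case
    using chi_nonempty by auto
next
  case (insert v A)
  then obtain rho where rho: "rho \<in> Mor" "chi rho" "\<forall>u\<in>A. d u \<le> d rho"
    by auto
  then obtain rho' where "rho' \<in> Mor" "chi rho'" "d v \<le> d rho'" "d rho \<le> d rho'"
    using chi_directed[of v rho] insert.prems by auto
  then show ?case
    using rho order_trans by blast
qed

definition limit_degree :: "nat \<Rightarrow> enat" where
  "limit_degree i = (SUP v\<in>{v \<in> Mor. chi v}. enat (d v i))"

lemma le_limit_degree: "v \<in> Mor \<Longrightarrow> chi v \<Longrightarrow> enat (d v i) \<le> limit_degree i"
  unfolding limit_degree_def by (rule SUP_upper) auto

lemma limit_degree_vanishes:
  assumes "k \<le> i"
  shows "limit_degree i = 0"
proof -
  have "limit_degree i \<le> 0"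
    unfolding limit_degree_def
    by (rule SUP_least) (use assms d_in_Nk in \<open>auto simp: in_Nk_def zero_enat_def\<close>)
  then show ?thesis
    by simp
qed

lemma chi_cofinal:
  assumes "\<forall>i. enat (q i) \<le> limit_degree i"
  shows "\<exists>rho\<in>Mor. chi rho \<and> q \<le> d rho"
proof -
  have "\<exists>v\<in>Mor. chi v \<and> q i \<le> d v i" for i
  proof (cases "q i = 0")
    case True
    then show ?thesis
      using chi_nonempty by auto
  next
    case False
    then have "enat (q i - 1) < limit_degree i"
      using assms[rule_format, of i] by (auto intro: order_less_le_trans[of _ "enat (q i)"])
    then obtain v where "v \<in> Mor" "chi v" "enat (q i - 1) < enat (d v i)"
      unfolding limit_degree_def less_SUP_iff by auto
    then show ?thesis
      by auto
  qed
  then obtain g where g: "\<And>i. g i \<in> Mor \<and> chi (g i) \<and> q i \<le> d (g i) i"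
    by metis
  obtain rho where rho: "rho \<in> Mor" "chi rho" "\<forall>v\<in>g ` {..<k}. d v \<le> d rho"
    using chi_upper_bound[of "g ` {..<k}"] g by auto
  have "q i \<le> d rho i" for i
  proof (cases "i < k")
    case True
    then have "d (g i) \<le> d rho"
      using rho(3) by simp
    then show ?thesis
      using g[of i] le_funD order_trans by metis
  next
    case False
    then show ?thesis
      using assms[rule_format, of i] limit_degree_vanishes by (simp add: zero_enat_def)
  qed
  then show ?thesis
    using rho by (auto simp: le_fun_def)
qed

lemma chi_of_degree_exists:
  assumes "\<forall>i. enat (q i) \<le> limit_degree i"
  shows "\<exists>v\<in>Mor. chi v \<and> d v = q"
proof -
  obtain rho where rho: "rho \<in> Mor" "chi rho" "q \<le> d rho"
    using chi_cofinal[OF assms] by blast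
  obtain a b where "a \<in> Mor" "b \<in> Mor" "s a = r b" "d a = q" "rho = cmp a b"
    using factorization_le[OF rho(1,3)] by blast
  then show ?thesis
    using chi_prefix_closed rho(2) by blast
qed

definition initial_segment :: "(nat \<Rightarrow> nat) \<Rightarrow> 'a" where
  "initial_segment q = (THE v. v \<in> Mor \<and> chi v \<and> d v = q)"

lemma initial_segment:
  assumes "\<forall>i. enat (q i) \<le> limit_degree i"
  shows "initial_segment q \<in> Mor" "chi (initial_segment q)" "d (initial_segment q) = q"
proof -
  have "\<exists>!v. v \<in> Mor \<and> chi v \<and> d v = q"
    using chi_of_degree_exists[OF assms] chi_degree_unique by blast
  from theI'[OF this] show "initial_segment q \<in> Mor" "chi (initial_segment q)"
    "d (initial_segment q) = q"
    unfolding initial_segment_def by auto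
qed

lemma initial_segment_degree:
  assumes "v \<in> Mor" "chi v"
  shows "initial_segment (d v) = v"
  using initial_segment[of "d v"] le_limit_degree[OF assms] chi_degree_unique assms by blast

lemma initial_segment_extends:
  assumes "p \<le> q" and q: "\<forall>i. enat (q i) \<le> limit_degree i"
  shows "\<exists>b\<in>Mor. s (initial_segment p) = r b \<and> initial_segment q = cmp (initial_segment p) b
    \<and> d b = (\<lambda>i. q i - p i)"
proof -
  have p: "\<forall>i. enat (p i) \<le> limit_degree i"
    using assms unfolding le_fun_def by (meson enat_ord_simps(1) order_trans)
  have "p \<le> d (initial_segment q)"
    using initial_segment(3)[OF q] \<open>p \<le> q\<close> by simp
  then obtain a b where ab: "a \<in> Mor" "b \<in> Mor" "s a = r b" "d a = p"
      "d b = (\<lambda>i. d (initial_segment q) i - p i)" "initial_segment q = cmp a b"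
    by (rule factorization_le[OF initial_segment(1)[OF q]])
  then have "chi a"
    using chi_prefix_closed initial_segment(2)[OF q] by metis
  then have "a = initial_segment p"
    using chi_degree_unique[OF ab(1) initial_segment(1)[OF p]] ab(4) initial_segment(2,3)[OF p] by simp
  then show ?thesis
    using ab initial_segment(3)[OF q] by auto
qed

definition limit_path :: "(nat \<Rightarrow> nat) \<times> (nat \<Rightarrow> nat) \<Rightarrow> 'a" where
  "limit_path = (\<lambda>(p, q). if (p, q) \<in> Omega_dom limit_degree
     then THE b. b \<in> Mor \<and> s (initial_segment p) = r b \<and> initial_segment q = cmp (initial_segment p) b
     else undefined)"

lemma limit_path_segment:
  assumes pq: "(p, q) \<in> Omega_dom limit_degree"
  shows "limit_path (p, q) \<in> Mor" "s (initial_segment p) = r (limit_path (p, q))"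
    and "initial_segment q = cmp (initial_segment p) (limit_path (p, q))"
    and "d (limit_path (p, q)) = (\<lambda>i. q i - p i)"
proof -
  have p: "\<forall>i. enat (p i) \<le> limit_degree i"
    using Omega_dom_diag(1)[OF pq] by (simp add: Omega_dom_diag_iff)
  obtain b where b: "b \<in> Mor" "s (initial_segment p) = r b"
      "initial_segment q = cmp (initial_segment p) b" "d b = (\<lambda>i. q i - p i)"
    using initial_segment_extends pq unfolding Omega_dom_def by blast
  have "(THE b. b \<in> Mor \<and> s (initial_segment p) = r b \<and>
      initial_segment q = cmp (initial_segment p) b) = b"
  proof (rule the_equality)
    fix b' assume "b' \<in> Mor \<and> s (initial_segment p) = r b' \<and>
      initial_segment q = cmp (initial_segment p) b'"
    then show "b' = b"
      using cmp_cancel_left[OF initial_segment(1)[OF p]] b by metis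
  qed (use b in blast)
  then have "limit_path (p, q) = b"
    using pq by (simp add: limit_path_def)
  then show "limit_path (p, q) \<in> Mor" "s (initial_segment p) = r (limit_path (p, q))"
    "initial_segment q = cmp (initial_segment p) (limit_path (p, q))"
    "d (limit_path (p, q)) = (\<lambda>i. q i - p i)"
    using b by auto
qed

lemma limit_path_diag:
  assumes pp: "(p, p) \<in> Omega_dom limit_degree"
  shows "limit_path (p, p) = s (initial_segment p)"
proof -
  have seg: "initial_segment p \<in> Mor"
    using initial_segment(1) pp by (simp add: Omega_dom_diag_iff)
  then have "s (initial_segment p) \<in> Obj"
    by (rule s_in_Obj)
  then have "s (initial_segment p) \<in> Mor" "s (initial_segment p) = r (s (initial_segment p))"
    using Obj_subset_Mor r_Obj by auto
  moreover note segment = limit_path_segment[OF pp]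
  ultimately show ?thesis
    using cmp_cancel_left[OF seg segment(1)] segment(2,3) cmp_s_right[OF seg] by metis
qed

lemma limit_path_initial:
  assumes q: "\<forall>i. enat (q i) \<le> limit_degree i"
  shows "limit_path (\<lambda>_. 0, q) = initial_segment q"
proof -
  let ?v = "initial_segment q"
  have dom: "(\<lambda>_. 0, q) \<in> Omega_dom limit_degree"
    using q by (simp add: Omega_dom_def le_fun_def)
  have v: "?v \<in> Mor" "chi ?v"
    using initial_segment[OF q] by auto
  have "r ?v \<in> Obj"
    using r_in_Obj v(1) by blast
  then have rv: "r ?v \<in> Mor" "s (r ?v) = r ?v" "d (r ?v) = (\<lambda>_. 0)"
    using Obj_subset_Mor s_Obj d_Obj by auto
  have "chi (r ?v)"
    using chi_prefix_closed[OF rv(1) v(1)] rv(2) cmp_r_left v by simp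
  then have "initial_segment (\<lambda>_. 0) = r ?v"
    using initial_segment_degree[OF rv(1)] rv(3) by simp
  note segment = limit_path_segment[OF dom, unfolded this]
  show ?thesis
    using cmp_cancel_left[OF rv(1) segment(1) v(1)] segment(2,3) rv(2) cmp_r_left[OF v(1)] by metis
qed

lemma limit_path_cmp:
  assumes pq: "(p, q) \<in> Omega_dom limit_degree" and qt: "(q, t) \<in> Omega_dom limit_degree"
  shows "cmp (limit_path (p, q)) (limit_path (q, t)) = limit_path (p, t)"
proof -
  let ?a = "initial_segment p" and ?x = "limit_path (p, q)" and ?y = "limit_path (q, t)"
  have a: "?a \<in> Mor"
    using initial_segment(1) Omega_dom_diag(1)[OF pq] by (simp add: Omega_dom_diag_iff)
  note seg1 = limit_path_segment[OF pq] and seg2 = limit_path_segment[OF qt]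
    and seg3 = limit_path_segment[OF Omega_dom_trans[OF pq qt]]
  have xy: "s ?x = r ?y"
    using seg1 seg2 s_cmp[OF a] by metis
  have "cmp ?a (limit_path (p, t)) = cmp (cmp ?a ?x) ?y"
    using seg1(3) seg2(3) seg3(3) by simp
  also have "\<dots> = cmp ?a (cmp ?x ?y)"
    using cmp_assoc[OF a seg1(1) seg2(1) seg1(2) xy] .
  finally have "cmp ?a (limit_path (p, t)) = cmp ?a (cmp ?x ?y)" .
  moreover have "cmp ?x ?y \<in> Mor" "s ?a = r (cmp ?x ?y)"
    using cmp_in_Mor[OF seg1(1) seg2(1) xy] r_cmp[OF seg1(1) seg2(1) xy] seg1(2) by auto
  ultimately show ?thesis
    using cmp_cancel_left[OF a] seg3(1,2) by metis
qed

lemma limit_path_in_paths: "(limit_degree, limit_path) \<in> paths"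
proof -
  have segment: "limit_path (p, q) \<in> Mor \<and> d (limit_path (p, q)) = (\<lambda>i. q i - p i) \<and>
      r (limit_path (p, q)) = limit_path (p, p) \<and> s (limit_path (p, q)) = limit_path (q, q)"
    if pq: "(p, q) \<in> Omega_dom limit_degree" for p q
  proof -
    note seg = limit_path_segment[OF pq]
    have "initial_segment p \<in> Mor"
      using initial_segment(1) Omega_dom_diag(1)[OF pq] by (simp add: Omega_dom_diag_iff)
    then have "s (initial_segment q) = s (limit_path (p, q))"
      using seg s_cmp by metis
    then show ?thesis
      using seg limit_path_diag Omega_dom_diag[OF pq] by simp
  qed
  have obj: "limit_path (p, p) \<in> Obj" if "(p, p) \<in> Omega_dom limit_degree" for p
    using limit_path_diag[OF that] s_in_Obj initial_segment(1) that
    by (simp add: Omega_dom_diag_iff)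
  show ?thesis
    unfolding X_Lambda_def using limit_degree_vanishes segment obj limit_path_cmp
    by (auto simp: limit_path_def)
qed

lemma limit_path_in_cylinder_iff:
  assumes "v \<in> Mor"
  shows "(limit_degree, limit_path) \<in> cylinder v \<longleftrightarrow> chi v"
proof
  assume "(limit_degree, limit_path) \<in> cylinder v"
  then have "\<forall>i. enat (d v i) \<le> limit_degree i" "limit_path (\<lambda>_. 0, d v) = v"
    unfolding cylinder_def by auto
  then show "chi v"
    using initial_segment(2) limit_path_initial by metis
next
  assume "chi v"
  then have "\<forall>i. enat (d v i) \<le> limit_degree i"
    using le_limit_degree assms by blast
  moreover from this have "limit_path (\<lambda>_. 0, d v) = v"
    using limit_path_initial initial_segment_degree assms \<open>chi v\<close> by simp
  ultimately show "(limit_degree, limit_path) \<in> cylinder v"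
    using limit_path_in_paths unfolding cylinder_def by auto
qed

end

lemma finitely_realised_imp_realised:
  assumes "finitely_aligned Mor r s cmp d"
    and "\<And>K. finite K \<Longrightarrow> K \<subseteq> Mor \<Longrightarrow> \<exists>y. \<forall>v\<in>K. y \<in> cylinder v \<longleftrightarrow> chi v"
    and "\<exists>v\<in>Mor. chi v"
  shows "\<exists>y\<in>paths. \<forall>v\<in>Mor. y \<in> cylinder v \<longleftrightarrow> chi v"
  using limit_path_in_paths[OF assms] limit_path_in_cylinder_iff[OF assms] by blast

abbreviation cantor_cube :: "('a \<Rightarrow> bool) topology" where
  "cantor_cube \<equiv> product_topology (\<lambda>_. discrete_topology UNIV) Mor"

definition cylinder_profile ::
  "(nat \<Rightarrow> enat) \<times> ((nat \<Rightarrow> nat) \<times> (nat \<Rightarrow> nat) \<Rightarrow> 'a) \<Rightarrow> 'a \<Rightarrow> bool" where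
  "cylinder_profile y = restrict (\<lambda>v. y \<in> cylinder v) Mor"

lemma cylinder_profile_in_cantor_cube: "cylinder_profile y \<in> topspace cantor_cube"
  by (simp add: cylinder_profile_def)

lemma
  assumes "v \<in> Mor"
  shows openin_cantor_cube_coordinate: "openin cantor_cube {f \<in> topspace cantor_cube. f v}"
    and closedin_cantor_cube_coordinate: "closedin cantor_cube {f \<in> topspace cantor_cube. f v}"
  using openin_product_discrete_coordinate[OF assms, where P="\<lambda>b. b"]
    closedin_product_discrete_coordinate[OF assms, where P="\<lambda>b. b"] by auto

lemma cylinder_profile_apply: "v \<in> Mor \<Longrightarrow> cylinder_profile y v \<longleftrightarrow> y \<in> cylinder v"
  by (simp add: cylinder_profile_def)

lemma topspace_pullback_cantor_cube:
  "topspace (pullback_topology paths cylinder_profile cantor_cube) = paths"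
  unfolding topspace_pullback_topology using cylinder_profile_in_cantor_cube by blast

lemma topspace_path_topology: "topspace (path_topology k Mor Obj r s cmp d) = paths"
  unfolding path_topology_def D_set_eq_UN_cylinder using cylinder_subset_paths by auto

definition cube_hit_set :: "('a \<times> 'a) set \<Rightarrow> ('a \<Rightarrow> bool) set" where
  "cube_hit_set G = (\<Union>mu\<in>snd ` G. {f \<in> topspace cantor_cube. f mu})"

lemma
  assumes "finite G" "snd ` G \<subseteq> Mor"
  shows openin_cube_hit_set: "openin cantor_cube (cube_hit_set G)"
    and closedin_cube_hit_set: "closedin cantor_cube (cube_hit_set G)"
  using assms openin_cantor_cube_coordinate closedin_cantor_cube_coordinate
  unfolding cube_hit_set_def by (blast intro: openin_Union closedin_Union)+

lemma D_set_eq_profile_preimage: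
  assumes "snd ` G \<subseteq> Mor"
  shows "D_set k Mor Obj r s cmp d G = cylinder_profile -` cube_hit_set G \<inter> paths"
proof -
  have "cylinder_profile y \<in> cube_hit_set G \<longleftrightarrow> (\<exists>mu\<in>snd ` G. y \<in> cylinder mu)" for y
    using assms cylinder_profile_in_cantor_cube[of y] cylinder_profile_apply
    unfolding cube_hit_set_def by blast
  then show ?thesis
    unfolding D_set_eq_UN_cylinder vimage_def using cylinder_subset_paths by (intro set_eqI) blast
qed

lemma openin_path_topology_imp_pullback:
  assumes "openin (path_topology k Mor Obj r s cmp d) U"
  shows "openin (pullback_topology paths cylinder_profile cantor_cube) U"
proof -
  have subbasic_open: "openin (pullback_topology paths cylinder_profile cantor_cube) B"
    if subbasic: "B \<in> insert paths (\<Union>G\<in>S_Lambda Mor r s cmp d.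
      {D_set k Mor Obj r s cmp d G, paths - D_set k Mor Obj r s cmp d G})" for B
  proof -
    have "\<exists>V. openin cantor_cube V \<and> B = cylinder_profile -` V \<inter> paths"
    proof (cases "B = paths")
      case True
      have "paths = cylinder_profile -` topspace cantor_cube \<inter> paths"
        using cylinder_profile_in_cantor_cube by blast
      then show ?thesis
        using True openin_topspace by blast
    next
      case False
      then obtain G where "G \<in> S_Lambda Mor r s cmp d"
        and B: "B = D_set k Mor Obj r s cmp d G \<or> B = paths - D_set k Mor Obj r s cmp d G"
        using subbasic by blast
      then have G: "finite G" "snd ` G \<subseteq> Mor"
        unfolding S_Lambda_def by auto
      have "cylinder_profile -` (topspace cantor_cube - cube_hit_set G) \<inter> paths =
          paths - D_set k Mor Obj r s cmp d G"
        unfolding D_set_eq_profile_preimage[OF G(2)] using cylinder_profile_in_cantor_cube by blast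
      moreover have "openin cantor_cube (topspace cantor_cube - cube_hit_set G)"
        using closedin_cube_hit_set[OF G] by (rule openin_diff[OF openin_topspace])
      ultimately show ?thesis
        using B openin_cube_hit_set[OF G] D_set_eq_profile_preimage[OF G(2)] by metis
    qed
    then show ?thesis
      unfolding openin_pullback_topology .
  qed
  have "generate_topology_on (insert paths (\<Union>G\<in>S_Lambda Mor r s cmp d.
      {D_set k Mor Obj r s cmp d G, paths - D_set k Mor Obj r s cmp d G})) U"
    using assms unfolding path_topology_def openin_topology_generated_by_iff .
  then show ?thesis
    by (rule generate_topology_on_coarsest[OF istopology_openin subbasic_open, rotated])
qed

lemma closedin_profile_D_set:
  assumes "finitely_aligned Mor r s cmp d" "finite F" "snd ` F \<subseteq> Mor"
  shows "closedin cantor_cube (cylinder_profile ` D_set k Mor Obj r s cmp d F)"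
proof (rule closedin_product_discrete)
  show "cylinder_profile ` D_set k Mor Obj r s cmp d F \<subseteq> topspace cantor_cube"
    using cylinder_profile_in_cantor_cube by blast
  fix chi assume chi: "chi \<in> topspace cantor_cube"
    and approx: "\<And>K. finite K \<Longrightarrow> K \<subseteq> Mor \<Longrightarrow>
      \<exists>f\<in>cylinder_profile ` D_set k Mor Obj r s cmp d F. \<forall>v\<in>K. f v = chi v"
  have realised: "\<exists>y. \<forall>v\<in>K. y \<in> cylinder v \<longleftrightarrow> chi v" if "finite K" "K \<subseteq> Mor" for K
    using approx[OF that] that(2) by (force simp: cylinder_profile_def)
  obtain y0 where "y0 \<in> D_set k Mor Obj r s cmp d F" "\<forall>v\<in>snd ` F. cylinder_profile y0 v = chi v"
    using approx[OF finite_imageI[OF assms(2)] assms(3)] by blast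
  then obtain mu where mu: "mu \<in> snd ` F" "chi mu"
    using assms(3) unfolding D_set_eq_UN_cylinder cylinder_profile_def by force
  then obtain y where y: "y \<in> paths" "\<forall>v\<in>Mor. y \<in> cylinder v \<longleftrightarrow> chi v"
    using finitely_realised_imp_realised[OF assms(1) realised] assms(3) by blast
  have "y \<in> D_set k Mor Obj r s cmp d F"
    using y mu assms(3) unfolding D_set_eq_UN_cylinder by force
  moreover have "cylinder_profile y = chi"
    using y chi by (auto simp: cylinder_profile_def PiE_iff extensional_def fun_eq_iff)
  ultimately show "chi \<in> cylinder_profile ` D_set k Mor Obj r s cmp d F"
    by blast
qed

end

theorem corollary5p8:
  fixes k :: nat and Mor Obj :: "'a set" and r s :: "'a \<Rightarrow> 'a"
    and cmp :: "'a \<Rightarrow> 'a \<Rightarrow> 'a" and d :: "'a \<Rightarrow> nat \<Rightarrow> nat"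
    and F :: "('a \<times> 'a) set"
  assumes "k_graph k Mor Obj r s cmp d"
    and "finitely_aligned Mor r s cmp d"
    and "F \<in> S_Lambda Mor r s cmp d"
  shows "compactin (path_topology k Mor Obj r s cmp d) (D_set k Mor Obj r s cmp d F)"
proof -
  interpret kgraph k Mor Obj r s cmp d
    by (rule kgraph.intro) (rule assms(1))
  have F: "finite F" "snd ` F \<subseteq> Mor"
    using assms(3) unfolding S_Lambda_def by auto
  have "compactin cantor_cube (cylinder_profile ` D_set k Mor Obj r s cmp d F)"
    using closedin_profile_D_set[OF assms(2) F]
    by (rule closedin_compact_space[rotated]) (simp add: compact_space_product_topology compact_space_discrete_topology)
  then have "compactin (pullback_topology paths cylinder_profile cantor_cube) (D_set k Mor Obj r s cmp d F)"
    by (rule compactin_pullback_topology[rotated]) (auto simp: D_set_def)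
  moreover have "topspace (pullback_topology paths cylinder_profile cantor_cube) =
      topspace (path_topology k Mor Obj r s cmp d)"
    by (simp add: topspace_path_topology topspace_pullback_cantor_cube)
  ultimately show ?thesis
    using openin_path_topology_imp_pullback by (rule compactin_contractive)
qed

end
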